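(* In the two-valued atomic model under the proportional-to-square-roots scheme, a $(k,l)$-partition is a Nash equilibrium if the following conditions hold: (1) $l-1\ge k$ (equivalently $\frac{\sqrt a}{\sqrt a+k}\ge\frac{\sqrt a}{\sqrt a+l-1}$); (2) $k\le l-\sqrt a$ (equivalently $\frac{1}{\sqrt a+k}\ge\frac1l$); (3) $k\ge l-\sqrt a-1$ (equivalently $\frac1l\ge\frac{1}{\sqrt a+k+1}$).
   Context: Atomic model with threshold $h$: every player has stake $1$ (small) or $a$ (large), with $h,a$ integers, $2\le a\le h-1$. Pools partition the players; a pool $C$ has reward $\rho(C)=1$ if its total stake is at least $h$, else $0$. Proportional-to-square-roots scheme: player $i$ with stake $a_i$ in pool $C$ receives $\frac{\sqrt{a_i}}{\sum_{j\in C}\sqrt{a_j}}\rho(C)$. A partition into winning pools is a Nash equilibrium if no player can strictly increase her payment by moving to another pool of the partition or opening a new pool alone. For integers $k,l$ with $k+a\ge h$ and $l\ge h+1$, a $(k,l)$-partition consists only of pools of the types: Type A: exactly one large player and $k$ small players; Type B: $l$ small players; Type C: $l-1$ small players. *)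

theory Defs
  imports Complex_Main "HOL-Library.Disjoint_Sets"
begin

definition pool_stake :: "('p \<Rightarrow> nat) \<Rightarrow> 'p set \<Rightarrow> nat" where
  "pool_stake s C = (\<Sum>j\<in>C. s j)"

definition reward :: "nat \<Rightarrow> ('p \<Rightarrow> nat) \<Rightarrow> 'p set \<Rightarrow> real" where
  "reward h s C = (if pool_stake s C \<ge> h then 1 else 0)"

definition pay :: "nat \<Rightarrow> ('p \<Rightarrow> nat) \<Rightarrow> 'p set \<Rightarrow> 'p \<Rightarrow> real" where
  "pay h s C i = sqrt (real (s i)) / (\<Sum>j\<in>C. sqrt (real (s j))) * reward h s C"

definition nash_eq :: "nat \<Rightarrow> ('p \<Rightarrow> nat) \<Rightarrow> 'p set \<Rightarrow> 'p set set \<Rightarrow> bool" where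
  "nash_eq h s N P \<longleftrightarrow>
     partition_on N P \<and>
     (\<forall>C\<in>P. reward h s C = 1) \<and>
     (\<forall>C\<in>P. \<forall>i\<in>C.
        (\<forall>C'\<in>P. C' \<noteq> C \<longrightarrow> pay h s (insert i C') i \<le> pay h s C i) \<and>
        pay h s {i} i \<le> pay h s C i)"

(* (k,l)-partition: every pool is of type A (one large player with stake a and k small players),
   type B (l small players) or type C (l-1 small players). *)
definition kl_partition :: "nat \<Rightarrow> ('p \<Rightarrow> nat) \<Rightarrow> nat \<Rightarrow> nat \<Rightarrow> 'p set set \<Rightarrow> bool" where
  "kl_partition a s k l P \<longleftrightarrow>
     (\<forall>C\<in>P.
        (\<exists>j\<in>C. s j = a \<and> (\<forall>m\<in>C - {j}. s m = 1) \<and> card (C - {j}) = k) \<or>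
        ((\<forall>m\<in>C. s m = 1) \<and> card C = l) \<or>
        ((\<forall>m\<in>C. s m = 1) \<and> card C = l - 1))"

end

theory Submission
  imports Defs
begin

(* Let w C be the sum of the square roots of the stakes in C.  A player i with x = sqrt (s i)
   in a winning pool C gets x / (x + w (C - {i})), and moving into another pool C' yields at
   most x / (x + w C'); so no move pays as long as w (C - {i}) <= w C'.  In a (k,l)-partition
   the number l - 1 separates these quantities: every pool weighs at least l - 1 (for type A
   this is condition (3)), and every pool without one of its players weighs at most l - 1
   (condition (1) when the large player leaves a type-A pool, condition (2) when a small one
   does).  Opening a pool alone never pays, since every single stake is below h. *)

definition sqrt_weight :: "('p \<Rightarrow> nat) \<Rightarrow> 'p set \<Rightarrow> real" where
  "sqrt_weight s C = (\<Sum>j\<in>C. sqrt (real (s j)))"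

lemma sqrt_weight_nonneg: "0 \<le> sqrt_weight s C"
  unfolding sqrt_weight_def by (simp add: sum_nonneg)

lemma sqrt_weight_insert:
  "finite C \<Longrightarrow> i \<notin> C \<Longrightarrow> sqrt_weight s (insert i C) = sqrt (real (s i)) + sqrt_weight s C"
  unfolding sqrt_weight_def by simp

lemma sqrt_weight_remove:
  "finite C \<Longrightarrow> i \<in> C \<Longrightarrow> sqrt_weight s C = sqrt (real (s i)) + sqrt_weight s (C - {i})"
  unfolding sqrt_weight_def by (rule sum.remove)

lemma pay_eq_of_winning:
  "reward h s C = 1 \<Longrightarrow> pay h s C i = sqrt (real (s i)) / sqrt_weight s C"
  unfolding pay_def sqrt_weight_def by simp

lemma pay_le: "pay h s C i \<le> sqrt (real (s i)) / sqrt_weight s C"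
  unfolding pay_def sqrt_weight_def
  by (rule mult_left_le) (auto simp: reward_def sum_nonneg)

lemma pay_nonneg: "0 \<le> pay h s C i"
  unfolding pay_def reward_def by (simp add: sum_nonneg)

lemma pay_singleton_losing: "s i < h \<Longrightarrow> pay h s {i} i = 0"
  unfolding pay_def reward_def pool_stake_def by simp

lemma pay_move_le:
  assumes "finite C" "finite C'" "i \<in> C" "i \<notin> C'"
    and "reward h s C = 1"
    and "sqrt_weight s (C - {i}) \<le> sqrt_weight s C'"
  shows "pay h s (insert i C') i \<le> pay h s C i"
proof (cases "s i = 0")
  case True
  then show ?thesis by (simp add: pay_def pay_nonneg)
next
  case False
  define x where "x = sqrt (real (s i))"
  have "x > 0" using False by (simp add: x_def)
  have "pay h s (insert i C') i \<le> x / (x + sqrt_weight s C')"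
    using pay_le[of h s "insert i C'" i] assms(2,4) by (simp add: sqrt_weight_insert x_def)
  also have "\<dots> \<le> x / (x + sqrt_weight s (C - {i}))"
    using \<open>x > 0\<close> assms(6) sqrt_weight_nonneg[of s C'] sqrt_weight_nonneg[of s "C - {i}"]
    by (intro divide_left_mono mult_pos_pos) auto
  also have "\<dots> = pay h s C i"
    using assms(1,3,5) by (simp add: pay_eq_of_winning sqrt_weight_remove x_def)
  finally show ?thesis .
qed

lemma small_pool_weight:
  assumes "\<forall>m\<in>C. s m = 1"
  shows "sqrt_weight s C = card C" and "pool_stake s C = card C"
  using assms by (simp_all add: sqrt_weight_def pool_stake_def)

lemma one_large_pool_weight:
  assumes "finite C" "j \<in> C" "s j = a" "\<forall>m\<in>C - {j}. s m = 1" "card (C - {j}) = k"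
  shows "sqrt_weight s C = sqrt (real a) + k" and "pool_stake s C = a + k"
proof -
  show "sqrt_weight s C = sqrt (real a) + k"
    using assms small_pool_weight(1)[of "C - {j}" s] by (simp add: sqrt_weight_remove[of C j])
  show "pool_stake s C = a + k"
    using assms small_pool_weight(2)[of "C - {j}" s] by (simp add: pool_stake_def sum.remove[of C j])
qed

lemma kl_pool_bounds:
  assumes "kl_partition a s k l P" "C \<in> P" "finite C"
    and "k + a \<ge> h" "l \<ge> h + 1"
    and "l - 1 \<ge> k"
    and "real k \<le> real l - sqrt (real a)"
    and "real k \<ge> real l - sqrt (real a) - 1"
  shows "h \<le> pool_stake s C"
    and "real l - 1 \<le> sqrt_weight s C"
    and "i \<in> C \<Longrightarrow> sqrt_weight s (C - {i}) \<le> real l - 1"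
proof -
  have remove: "sqrt_weight s (C - {i}) = sqrt_weight s C - sqrt (real (s i))" if "i \<in> C" for i
    using assms(3) that by (simp add: sqrt_weight_remove)
  consider
      (large) j where "j \<in> C" "s j = a" "\<forall>m\<in>C - {j}. s m = 1" "card (C - {j}) = k"
    | (small) "\<forall>m\<in>C. s m = 1" "card C = l \<or> card C = l - 1"
    using assms(1,2) unfolding kl_partition_def by blast
  then have "h \<le> pool_stake s C \<and> real l - 1 \<le> sqrt_weight s C \<and>
      (\<forall>i\<in>C. sqrt_weight s (C - {i}) \<le> real l - 1)"
  proof cases
    case large
    note w = one_large_pool_weight[OF assms(3) large]
    have "sqrt_weight s (C - {i}) \<le> real l - 1" if "i \<in> C" for i
      using that w large assms(5,6,7) remove by (cases "i = j") auto
    then show ?thesis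
      using w assms(4,8) by auto
  next
    case small
    note w = small_pool_weight[OF small(1)]
    show ?thesis
      using w small assms(5) remove by auto
  qed
  then show "h \<le> pool_stake s C" "real l - 1 \<le> sqrt_weight s C"
    and "i \<in> C \<Longrightarrow> sqrt_weight s (C - {i}) \<le> real l - 1"
    by auto
qed

theorem lemmaD1:
  fixes h a k l :: nat and s :: "'p \<Rightarrow> nat" and N :: "'p set" and P :: "'p set set"
  assumes "2 \<le> a" and "a \<le> h - 1"
    and "finite N"
    and "\<forall>i\<in>N. s i = 1 \<or> s i = a"
    and "k + a \<ge> h" and "l \<ge> h + 1"
    and "partition_on N P"
    and "kl_partition a s k l P"
    and "l - 1 \<ge> k"
    and "real k \<le> real l - sqrt (real a)"
    and "real k \<ge> real l - sqrt (real a) - 1"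
  shows "nash_eq h s N P"
proof -
  have finite_pool: "finite C" if "C \<in> P" for C
    using that partition_onD1[OF assms(7)] by (intro finite_subset[OF _ assms(3)]) blast
  have bounds: "h \<le> pool_stake s C" "real l - 1 \<le> sqrt_weight s C"
    "\<And>i. i \<in> C \<Longrightarrow> sqrt_weight s (C - {i}) \<le> real l - 1" if "C \<in> P" for C
    using kl_pool_bounds[OF assms(8) that finite_pool[OF that] assms(5,6,9,10,11)] by auto
  have winning: "reward h s C = 1" if "C \<in> P" for C
    using bounds(1)[OF that] by (simp add: reward_def)
  show ?thesis unfolding nash_eq_def
  proof (intro conjI ballI allI impI)
    fix C i C' assume C: "C \<in> P" "i \<in> C" and C': "C' \<in> P" "C' \<noteq> C"
    have "i \<notin> C'"
      using disjointD[OF partition_onD2[OF assms(7)] C'(1) C(1) C'(2)] C(2) by blast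
    moreover have "sqrt_weight s (C - {i}) \<le> sqrt_weight s C'"
      using bounds(3)[OF C] bounds(2)[OF C'(1)] by linarith
    ultimately show "pay h s (insert i C') i \<le> pay h s C i"
      using C C'(1) finite_pool winning by (intro pay_move_le) auto
  next
    fix C i assume "C \<in> P" "i \<in> C"
    then have "i \<in> N"
      using assms(7) partition_onD1 by blast
    then have "s i < h"
      using assms(1,2,4) by auto
    then show "pay h s {i} i \<le> pay h s C i"
      by (simp add: pay_singleton_losing pay_nonneg)
  qed (use assms(7) winning in auto)
qed

end
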